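(* Let $G$ be a finite group. For every proper subgroup $H\subsetneq G$, the set $f_{G-H}=\bigcup_{g\in G-H}\{\{a,ag\}\mid a\in G\}$ is the set of bases of a rank-$2$ matroid on the ground set $G$ (which is invariant under left multiplication). Conversely, every rank-$2$ matroid on the ground set $G$ whose set of bases is invariant under left multiplication by $G$ has set of bases $f_{G-H}$ for a unique proper subgroup $H$ of $G$. Consequently, two-dimensional tropical subrepresentations of the boolean regular representation $\mathbb{B}[G]$ correspond bijectively to proper subgroups of $G$.
   Context: $G$ acts on $\binom{G}{2}$ (2-element subsets of $G$) by $x\cdot\{a,b\}=\{xa,xb\}$. For $g\in G$, $f_g=\{\{a,ag\}\mid a\in G\}$ ($f_e=\emptyset$), and for $S\subseteq G$, $f_S=\bigcup_{g\in S}f_g$. Over the boolean semifield $\mathbb{B}=\{0,1\}$, $\mathbb{B}[G]$ is the free $\mathbb{B}$-module with basis $\{\mathbf{e}_g\}_{g\in G}$ and $G$ acting by $x\cdot\mathbf{e}_a=\mathbf{e}_{xa}$; its $d$-dimensional tropical subrepresentations are equivalent to rank-$d$ matroids on the ground set $G$ whose set of bases is invariant under the induced action of $G$ on $\binom{G}{d}$. *)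

theory Defs
  imports "HOL-Algebra.Group"
begin

definition matroid_bases :: "'a set \<Rightarrow> 'a set set \<Rightarrow> bool" where
  "matroid_bases E \<B> \<longleftrightarrow> finite E \<and> \<B> \<noteq> {} \<and> (\<forall>B\<in>\<B>. B \<subseteq> E) \<and>
     (\<forall>B1\<in>\<B>. \<forall>B2\<in>\<B>. \<forall>x\<in>B1 - B2. \<exists>y\<in>B2 - B1. insert y (B1 - {x}) \<in> \<B>)"

definition rank_matroid_bases :: "nat \<Rightarrow> 'a set \<Rightarrow> 'a set set \<Rightarrow> bool" where
  "rank_matroid_bases d E \<B> \<longleftrightarrow> matroid_bases E \<B> \<and> (\<forall>B\<in>\<B>. card B = d)"

definition left_invariant :: "('g, 'b) monoid_scheme \<Rightarrow> 'g set set \<Rightarrow> bool" where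
  "left_invariant G \<B> \<longleftrightarrow> (\<forall>x\<in>carrier G. \<forall>B\<in>\<B>. (\<lambda>a. x \<otimes>\<^bsub>G\<^esub> a) ` B \<in> \<B>)"

definition f_elem :: "('g, 'b) monoid_scheme \<Rightarrow> 'g \<Rightarrow> 'g set set" where
  "f_elem G g = (if g = \<one>\<^bsub>G\<^esub> then {} else {{a, a \<otimes>\<^bsub>G\<^esub> g} | a. a \<in> carrier G})"

definition f_set :: "('g, 'b) monoid_scheme \<Rightarrow> 'g set \<Rightarrow> 'g set set" where
  "f_set G S = (\<Union>g\<in>S. f_elem G g)"

end

theory Submission
  imports Defs "HOL-Algebra.Coset"
begin

(*
  The bases of a loopless rank-2 matroid are exactly the pairs of non-parallel elements, and
  parallelism is an equivalence relation (transitivity is basis exchange); conversely the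
  pairs separated by any nontrivial equivalence relation form such a basis system. Invariance
  under left translations turns parallelism into a left-invariant equivalence on G, i.e. the
  partition into left cosets a H of the subgroup H of elements parallel to 1; and f (G - H) is
  precisely the set of pairs {a, b} lying in different left cosets of H.
*)

definition separated_pairs :: "'a set \<Rightarrow> 'a rel \<Rightarrow> 'a set set" where
  "separated_pairs E R = {{a, b} | a b. a \<in> E \<and> b \<in> E \<and> (a, b) \<notin> R}"

definition parallel :: "'a set set \<Rightarrow> 'a set \<Rightarrow> 'a rel" where
  "parallel \<B> E = {(a, b). a \<in> E \<and> b \<in> E \<and> {a, b} \<notin> \<B>}"

lemma rank_matroid_bases_separated_pairs:
  assumes R: "equiv E R" and "finite E" and "R \<noteq> E \<times> E"
  shows "rank_matroid_bases 2 E (separated_pairs E R)"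
proof -
  have RE: "R \<subseteq> E \<times> E" and refl: "\<And>a. a \<in> E \<Longrightarrow> (a, a) \<in> R"
    and sym: "\<And>a b. (a, b) \<in> R \<Longrightarrow> (b, a) \<in> R"
    and trans: "\<And>a b c. (a, b) \<in> R \<Longrightarrow> (b, c) \<in> R \<Longrightarrow> (a, c) \<in> R"
    using R by (auto elim!: equivE dest: refl_onD symD transD)
  let ?\<B> = "separated_pairs E R"
  have distinct: "a \<noteq> b" if "a \<in> E" "(a, b) \<notin> R" for a b
    using refl that by blast
  have exchange: "\<exists>y\<in>B2 - B1. insert y (B1 - {x}) \<in> ?\<B>"
    if B1: "B1 \<in> ?\<B>" and B2: "B2 \<in> ?\<B>" and x: "x \<in> B1 - B2" for B1 B2 x
  proof -
    obtain z where z: "z \<in> E" "x \<in> E" "B1 = {x, z}" "(z, x) \<notin> R"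
      using B1 x sym unfolding separated_pairs_def by (auto simp: insert_commute)
    obtain c d where cd: "c \<in> E" "d \<in> E" "B2 = {c, d}" "(c, d) \<notin> R"
      using B2 unfolding separated_pairs_def by blast
    \<comment> \<open>\<open>z\<close> cannot be equivalent to both ends of the separated pair \<open>B2\<close>\<close>
    obtain y where y: "y \<in> B2" "y \<in> E" "(z, y) \<notin> R"
    proof (cases "(z, c) \<in> R")
      case True
      then have "(z, d) \<notin> R" using cd(4) sym trans by blast
      then show ?thesis using that cd by blast
    qed (use that cd in blast)
    have "B1 - {x} = {z}" using z distinct by auto
    moreover have "y \<notin> B1" using x y z distinct by auto
    ultimately show ?thesis
      using y z unfolding separated_pairs_def by (intro bexI[of _ y]) blast+
  qed
  have "?\<B> \<noteq> {}" using RE assms(3) unfolding separated_pairs_def by blast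
  moreover have "\<forall>B\<in>?\<B>. B \<subseteq> E \<and> card B = 2"
    unfolding separated_pairs_def using distinct by auto
  ultimately show ?thesis
    using assms(2) exchange unfolding rank_matroid_bases_def matroid_bases_def by blast
qed

lemma rank2_nonbasis_trans:
  assumes M: "rank_matroid_bases 2 E \<B>" and b: "b \<in> \<Union>\<B>"
    and ab: "{a, b} \<notin> \<B>" and bc: "{b, c} \<notin> \<B>"
  shows "{a, c} \<notin> \<B>"
proof
  assume ac: "{a, c} \<in> \<B>"
  have card2: "\<And>B. B \<in> \<B> \<Longrightarrow> card B = 2"
    and exch: "\<And>B1 B2 x. B1 \<in> \<B> \<Longrightarrow> B2 \<in> \<B> \<Longrightarrow> x \<in> B1 - B2 \<Longrightarrow>
                 \<exists>y\<in>B2 - B1. insert y (B1 - {x}) \<in> \<B>"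
    using M unfolding rank_matroid_bases_def matroid_bases_def by blast+
  obtain B where "B \<in> \<B>" "b \<in> B" using b by blast
  then obtain d where bd: "{b, d} \<in> \<B>" "b \<noteq> d"
    using card2 by (metis card_2_iff doubleton_eq_iff insertE singletonD)
  have "d \<notin> {a, c}" using bd ab bc by (metis insert_commute insertE singletonD)
  then obtain y where "y \<in> {a, c}" "insert y ({b, d} - {d}) \<in> \<B>"
    using exch[OF bd(1) ac, of d] by blast
  moreover have "{b, d} - {d} = {b}" using bd(2) by auto
  ultimately have "{y, b} \<in> \<B>" by simp
  then show False using \<open>y \<in> {a, c}\<close> ab bc by (metis insert_commute insertE singletonD)
qed

lemma rank2_bases_eq_separated_pairs:
  assumes M: "rank_matroid_bases 2 E \<B>"
  shows "\<B> = separated_pairs E (parallel \<B> E)"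
proof -
  have "\<exists>a b. a \<in> E \<and> b \<in> E \<and> B = {a, b}" if "B \<in> \<B>" for B
    using M that unfolding rank_matroid_bases_def matroid_bases_def
    by (metis card_2_iff insert_subset)
  then show ?thesis unfolding separated_pairs_def parallel_def by blast
qed

lemma equiv_parallel:
  assumes M: "rank_matroid_bases 2 E \<B>" and loopless: "E \<subseteq> \<Union>\<B>"
  shows "equiv E (parallel \<B> E)"
proof (rule equivI)
  have "{a} \<notin> \<B>" for a using M unfolding rank_matroid_bases_def by fastforce
  then show "refl_on E (parallel \<B> E)" unfolding parallel_def refl_on_def by auto
  show "sym (parallel \<B> E)" unfolding parallel_def sym_def by (auto simp: insert_commute)
  show "trans (parallel \<B> E)"
    using rank2_nonbasis_trans[OF M] loopless unfolding parallel_def trans_def by blast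
qed (auto simp: parallel_def)

lemma separated_pairs_inj:
  assumes "R \<subseteq> E \<times> E" "sym R" "R' \<subseteq> E \<times> E" "sym R'"
    and "separated_pairs E R = separated_pairs E R'"
  shows "R = R'"
proof -
  have "(a, b) \<in> R \<longleftrightarrow> a \<in> E \<and> b \<in> E \<and> {a, b} \<notin> separated_pairs E R"
    if "R \<subseteq> E \<times> E" "sym R" for R a b
    using that unfolding separated_pairs_def sym_def by (auto simp: doubleton_eq_iff)
  then show ?thesis using assms by auto
qed

context group
begin

lemma f_set_compl_eq_separated_pairs:
  assumes H: "subgroup H G"
  shows "f_set G (carrier G - H) = separated_pairs (carrier G) (rcong H)"
proof (intro equalityI subsetI)
  fix S assume "S \<in> f_set G (carrier G - H)"
  then obtain g a where "g \<in> carrier G" "g \<notin> H" "a \<in> carrier G" "S = {a, a \<otimes> g}"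
    unfolding f_set_def f_elem_def by (auto split: if_splits)
  moreover have "inv a \<otimes> (a \<otimes> g) = g" using calculation by (simp add: m_assoc[symmetric])
  ultimately show "S \<in> separated_pairs (carrier G) (rcong H)"
    unfolding separated_pairs_def r_congruent_def
    by (intro CollectI exI[of _ a] exI[of _ "a \<otimes> g"]) auto
next
  fix S assume "S \<in> separated_pairs (carrier G) (rcong H)"
  then obtain a b where ab: "a \<in> carrier G" "b \<in> carrier G" "S = {a, b}" "inv a \<otimes> b \<notin> H"
    unfolding separated_pairs_def r_congruent_def by blast
  have "inv a \<otimes> b \<noteq> \<one>" using ab(4) subgroup.one_closed[OF H] by auto
  moreover have "a \<otimes> (inv a \<otimes> b) = b" using ab by (simp add: m_assoc[symmetric])
  ultimately have "S \<in> f_elem G (inv a \<otimes> b)" using ab unfolding f_elem_def by auto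
  then show "S \<in> f_set G (carrier G - H)" using ab unfolding f_set_def by auto
qed

lemma left_invariant_image_iff:
  assumes "left_invariant G \<B>" "x \<in> carrier G" "B \<subseteq> carrier G"
  shows "(\<lambda>a. x \<otimes> a) ` B \<in> \<B> \<longleftrightarrow> B \<in> \<B>"
proof
  assume "(\<lambda>a. x \<otimes> a) ` B \<in> \<B>"
  then have "(\<lambda>a. inv x \<otimes> a) ` (\<lambda>a. x \<otimes> a) ` B \<in> \<B>"
    using assms unfolding left_invariant_def by blast
  moreover have "(\<lambda>a. inv x \<otimes> a) ` (\<lambda>a. x \<otimes> a) ` B = B"
    using assms(2,3) by (force simp: image_image m_assoc[symmetric])
  ultimately show "B \<in> \<B>" by simp
qed (use assms in \<open>auto simp: left_invariant_def\<close>)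

lemma left_invariant_separated_pairs_rcong:
  "left_invariant G (separated_pairs (carrier G) (rcong H))"
  unfolding left_invariant_def
proof (intro ballI)
  fix x S assume x: "x \<in> carrier G" and "S \<in> separated_pairs (carrier G) (rcong H)"
  then obtain a b where ab: "a \<in> carrier G" "b \<in> carrier G" "S = {a, b}" "inv a \<otimes> b \<notin> H"
    unfolding separated_pairs_def r_congruent_def by blast
  have "inv (x \<otimes> a) \<otimes> (x \<otimes> b) = inv a \<otimes> b"
    using x ab by (simp add: inv_mult_group m_assoc) (simp add: m_assoc[symmetric])
  then show "(\<lambda>c. x \<otimes> c) ` S \<in> separated_pairs (carrier G) (rcong H)"
    using x ab unfolding separated_pairs_def r_congruent_def
    by (intro CollectI exI[of _ "x \<otimes> a"] exI[of _ "x \<otimes> b"]) auto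
qed

lemma left_invariant_covers_carrier:
  assumes "left_invariant G \<B>" "B \<in> \<B>" "a \<in> B" "a \<in> carrier G"
  shows "carrier G \<subseteq> \<Union>\<B>"
proof
  fix g assume g: "g \<in> carrier G"
  have "(\<lambda>b. (g \<otimes> inv a) \<otimes> b) ` B \<in> \<B>"
    using assms g unfolding left_invariant_def by blast
  moreover have "(g \<otimes> inv a) \<otimes> a = g" using assms(4) g by (simp add: m_assoc)
  moreover have "g \<in> (\<lambda>b. (g \<otimes> inv a) \<otimes> b) ` B"
    by (rule rev_image_eqI[of a, OF assms(3)]) (simp add: calculation(2))
  ultimately show "g \<in> \<Union>\<B>" by blast
qed

lemma left_invariant_equiv_eq_rcong:
  assumes R: "equiv (carrier G) R"
    and inv: "\<And>x a b. x \<in> carrier G \<Longrightarrow> (a, b) \<in> R \<Longrightarrow> (x \<otimes> a, x \<otimes> b) \<in> R"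
  shows "subgroup (R `` {\<one>}) G" and "R = rcong (R `` {\<one>})"
proof -
  have RG: "R \<subseteq> carrier G \<times> carrier G" using R by (rule equiv_type)
  have one: "(\<one>, \<one>) \<in> R" using R by (blast elim: equivE dest: refl_onD)
  have sym: "sym R" and trans: "trans R" using R by (blast elim: equivE)+
  have transl: "(a, b) \<in> R \<longleftrightarrow> inv a \<otimes> b \<in> R `` {\<one>}"
    if "a \<in> carrier G" "b \<in> carrier G" for a b
    using inv[of "inv a" a b] inv[of a \<one> "inv a \<otimes> b"] that
    by (auto simp: m_assoc[symmetric])
  show "subgroup (R `` {\<one>}) G"
  proof (rule subgroupI)
    show "R `` {\<one>} \<subseteq> carrier G" "R `` {\<one>} \<noteq> {}" using RG one by auto
  next
    fix h assume "h \<in> R `` {\<one>}"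
    then have "h \<in> carrier G" "(\<one>, h) \<in> R" using RG by auto
    then have "(inv h \<otimes> \<one>, inv h \<otimes> h) \<in> R" using inv by blast
    with \<open>h \<in> carrier G\<close> show "inv h \<in> R `` {\<one>}" using sym by (auto dest: symD)
  next
    fix h k assume "h \<in> R `` {\<one>}" "k \<in> R `` {\<one>}"
    then have "(\<one>, h) \<in> R" "(h \<otimes> \<one>, h \<otimes> k) \<in> R" "h \<in> carrier G" using inv RG by auto
    then show "h \<otimes> k \<in> R `` {\<one>}" using trans by (auto dest: transD)
  qed
  show "R = rcong (R `` {\<one>})"
    using RG transl unfolding r_congruent_def by auto
qed

lemma rcong_inj:
  assumes "subgroup H G" "subgroup K G" "rcong H = rcong K"
  shows "H = K"
proof -
  have "h \<in> L \<longleftrightarrow> h \<in> carrier G \<and> (\<one>, h) \<in> rcong L" if "subgroup L G" for L h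
    using that subgroup.subset unfolding r_congruent_def by fastforce
  then show ?thesis using assms by blast
qed

lemma rank2_left_invariant_f_set_compl:
  assumes "finite (carrier G)" "subgroup H G" "H \<noteq> carrier G"
  shows "rank_matroid_bases 2 (carrier G) (f_set G (carrier G - H))"
    and "left_invariant G (f_set G (carrier G - H))"
proof -
  obtain g where "g \<in> carrier G" "g \<notin> H" using assms(2,3) subgroup.subset by blast
  then have "(\<one>, g) \<notin> rcong H" unfolding r_congruent_def by simp
  then have "rcong H \<noteq> carrier G \<times> carrier G" using \<open>g \<in> carrier G\<close> by blast
  then show "rank_matroid_bases 2 (carrier G) (f_set G (carrier G - H))"
    using rank_matroid_bases_separated_pairs subgroup.equiv_rcong[OF assms(2) is_group] assms(1)
    by (simp add: f_set_compl_eq_separated_pairs[OF assms(2)])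
  show "left_invariant G (f_set G (carrier G - H))"
    using left_invariant_separated_pairs_rcong
    by (simp add: f_set_compl_eq_separated_pairs[OF assms(2)])
qed

lemma f_set_compl_inj:
  assumes H: "subgroup H G" and K: "subgroup K G"
    and eq: "f_set G (carrier G - H) = f_set G (carrier G - K)"
  shows "H = K"
proof -
  have "equiv (carrier G) (rcong H)" "equiv (carrier G) (rcong K)"
    using subgroup.equiv_rcong H K is_group by blast+
  then have "rcong H = rcong K"
    using eq separated_pairs_inj[of "rcong H" "carrier G" "rcong K"]
    by (simp add: f_set_compl_eq_separated_pairs H K equiv_type equiv_def)
  then show ?thesis using rcong_inj H K by blast
qed

lemma left_invariant_rank2_eq_f_set_compl:
  assumes M: "rank_matroid_bases 2 (carrier G) \<B>" and LI: "left_invariant G \<B>"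
  obtains H where "subgroup H G" "H \<noteq> carrier G" "\<B> = f_set G (carrier G - H)"
proof -
  let ?R = "parallel \<B> (carrier G)"
  have "\<exists>B\<in>\<B>. \<exists>a\<in>B. a \<in> carrier G"
    using M unfolding rank_matroid_bases_def matroid_bases_def
    by (metis all_not_in_conv card.empty ex_in_conv subsetD zero_neq_numeral)
  then have "carrier G \<subseteq> \<Union>\<B>" using left_invariant_covers_carrier[OF LI] by blast
  then have R: "equiv (carrier G) ?R" using equiv_parallel[OF M] by blast
  have "(x \<otimes> a, x \<otimes> b) \<in> ?R" if "x \<in> carrier G" "(a, b) \<in> ?R" for x a b
    using that left_invariant_image_iff[OF LI that(1), of "{a, b}"] unfolding parallel_def by auto
  then have H: "subgroup (?R `` {\<one>}) G" and RH: "?R = rcong (?R `` {\<one>})"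
    using left_invariant_equiv_eq_rcong[OF R] by blast+
  have B: "\<B> = f_set G (carrier G - ?R `` {\<one>})"
    using rank2_bases_eq_separated_pairs[OF M] RH by (simp add: f_set_compl_eq_separated_pairs[OF H])
  moreover have "?R `` {\<one>} \<noteq> carrier G"
  proof
    assume "?R `` {\<one>} = carrier G"
    then have "f_set G (carrier G - ?R `` {\<one>}) = {}" by (simp add: f_set_def)
    with B M show False unfolding rank_matroid_bases_def matroid_bases_def by blast
  qed
  ultimately show ?thesis using that H by blast
qed

end

theorem mainTheorem5:
  fixes G :: "('g, 'b) monoid_scheme"
  assumes "group G" and "finite (carrier G)"
  shows "(\<forall>H. subgroup H G \<and> H \<noteq> carrier G \<longrightarrow>
            rank_matroid_bases 2 (carrier G) (f_set G (carrier G - H)) \<and>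
            left_invariant G (f_set G (carrier G - H)))
       \<and> (\<forall>\<B>. rank_matroid_bases 2 (carrier G) \<B> \<and> left_invariant G \<B> \<longrightarrow>
            (\<exists>!H. subgroup H G \<and> H \<noteq> carrier G \<and> \<B> = f_set G (carrier G - H)))
       \<and> bij_betw (\<lambda>H. f_set G (carrier G - H))
            {H. subgroup H G \<and> H \<noteq> carrier G}
            {\<B>. rank_matroid_bases 2 (carrier G) \<B> \<and> left_invariant G \<B>}"
proof -
  interpret group G by (rule assms(1))
  have into: "rank_matroid_bases 2 (carrier G) (f_set G (carrier G - H)) \<and>
      left_invariant G (f_set G (carrier G - H))" if "subgroup H G" "H \<noteq> carrier G" for H
    using rank2_left_invariant_f_set_compl[OF assms(2) that] by blast
  have onto: "\<exists>H. subgroup H G \<and> H \<noteq> carrier G \<and> \<B> = f_set G (carrier G - H)"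
    if "rank_matroid_bases 2 (carrier G) \<B>" "left_invariant G \<B>" for \<B>
    using left_invariant_rank2_eq_f_set_compl[OF that] by metis
  have "inj_on (\<lambda>H. f_set G (carrier G - H)) {H. subgroup H G \<and> H \<noteq> carrier G}"
    by (rule inj_onI) (use f_set_compl_inj in blast)
  moreover have "(\<lambda>H. f_set G (carrier G - H)) ` {H. subgroup H G \<and> H \<noteq> carrier G} =
      {\<B>. rank_matroid_bases 2 (carrier G) \<B> \<and> left_invariant G \<B>}"
    using into onto by blast
  moreover have "\<exists>!H. subgroup H G \<and> H \<noteq> carrier G \<and> \<B> = f_set G (carrier G - H)"
    if "rank_matroid_bases 2 (carrier G) \<B> \<and> left_invariant G \<B>" for \<B>
    using onto that f_set_compl_inj by blast
  ultimately show ?thesis using into unfolding bij_betw_def by (intro conjI allI impI) auto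
qed

end
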